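(* Let $(X_m)_{m\in[0,\zeta)}$ be a discrete-time (sub-)Markov chain on a countable set $S$ with lifetime $\zeta$, started at $x_0$. Fix $w\in S\setminus\{x_0\}$ and let $T_1=\inf\{n>0:X_n=w\}$, $T_N=\inf\{m>T_{N-1}:X_m=w\}$ ($\inf\emptyset=\infty$). For $N\ge1$ with $\mathbb P[T_N<\infty]>0$, let $LE[0,T_N]$ be the loop erasure of the finite path $(X_0,\ldots,X_{T_N})$. Then the conditional law of $LE[0,T_N]$ given $\{T_N<\infty\}$ equals the conditional law of $LE[0,T_1]$ given $\{T_1<\infty\}$.
   Context: Loop erasure of a finite path $(\xi_0,\ldots,\xi_K)$: set $y_0=\xi_0$; if $y_i$ is defined and $y_i\ne\xi_K$, let $T_i=1+\max\{n\le K:\xi_n=y_i\}$ and $y_{i+1}=\xi_{T_i}$; stop when $y_i=\xi_K$. The loop-erased path is $(y_0,y_1,\ldots)$, a self-avoiding path from $\xi_0$ to $\xi_K$. *)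

theory Defs
  imports "HOL-Probability.Probability"
begin

definition substochastic :: "('a::countable \<Rightarrow> 'a \<Rightarrow> real) \<Rightarrow> bool" where
  "substochastic p \<longleftrightarrow>
     (\<forall>x y. 0 \<le> p x y) \<and> (\<forall>x. p x summable_on UNIV \<and> infsum (p x) UNIV \<le> 1)"

text \<open>A discrete-time sub-Markov chain with kernel p started at x0 and killed at its
  lifetime: X n \<omega> = None means n \<ge> lifetime (the cemetery is absorbing); the
  finite-dimensional distributions are those of the chain.\<close>
definition sub_markov_chain ::
  "'w measure \<Rightarrow> (nat \<Rightarrow> 'w \<Rightarrow> 'a::countable option) \<Rightarrow> ('a \<Rightarrow> 'a \<Rightarrow> real) \<Rightarrow> 'a \<Rightarrow> bool" where
  "sub_markov_chain M X p x0 \<longleftrightarrow>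
     prob_space M \<and> substochastic p \<and>
     (\<forall>n. X n \<in> measurable M (count_space UNIV)) \<and>
     (\<forall>n. \<forall>\<omega>\<in>space M. X n \<omega> = None \<longrightarrow> X (Suc n) \<omega> = None) \<and>
     (\<forall>n \<xi>. measure M {\<omega>\<in>space M. \<forall>i\<le>n. X i \<omega> = Some (\<xi> i)} =
        (if \<xi> 0 = x0 then (\<Prod>i<n. p (\<xi> i) (\<xi> (Suc i))) else 0))"

fun hit_time :: "(nat \<Rightarrow> 'w \<Rightarrow> 'a option) \<Rightarrow> 'a \<Rightarrow> nat \<Rightarrow> 'w \<Rightarrow> enat" where
  "hit_time X w 0 \<omega> = 0"
| "hit_time X w (Suc N) \<omega> =
     (case hit_time X w N \<omega> of
        \<infinity> \<Rightarrow> \<infinity>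
      | enat t \<Rightarrow> (if \<exists>m>t. X m \<omega> = Some w
                   then enat (LEAST m. m > t \<and> X m \<omega> = Some w) else \<infinity>))"

text \<open>Loop erasure of a finite path (as in the context): keep x, then continue with the
  part of the path strictly after the last visit to x.\<close>
function loop_erase :: "'a list \<Rightarrow> 'a list" where
  "loop_erase [] = []"
| "loop_erase (x # xs) = x # loop_erase (rev (takeWhile (\<lambda>y. y \<noteq> x) (rev xs)))"
  by pat_completeness auto
termination
  by (relation "Wellfounded.measure length") (auto simp: le_imp_less_Suc intro!: le_imp_less_Suc order.trans[OF length_takeWhile_le])

definition path_upto :: "(nat \<Rightarrow> 'w \<Rightarrow> 'a option) \<Rightarrow> nat \<Rightarrow> 'w \<Rightarrow> 'a list" where
  "path_upto X t \<omega> = map (\<lambda>i. the (X i \<omega>)) [0..<Suc t]"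

end

theory Submission
  imports Defs
begin

text \<open>
  A path stopped at the N-th visit to w is a path to the first visit followed by N - 1 excursions
  from w back to w, and its weight factorises accordingly. For a first-visit path a and one
  excursion e, let v be the first vertex of the loop erasure of a that e visits; exchanging the
  part of a after its last visit to the earlier vertices of the loop erasure (which starts at v)
  with the part of e from its first visit to v is a weight-preserving involution on such pairs
  which turns the loop erasure of a @ e into that of the new first-visit path. Hence the weighted
  law of the loop erasure after N visits is the one after a single visit, times the (N - 1)-th
  power of the total excursion weight, and the constant cancels after conditioning.
\<close>

section \<open>Loop erasure\<close>

definition loop_erase_step :: "'a list \<Rightarrow> 'a \<Rightarrow> 'a list" where
  "loop_erase_step L y = (if y \<in> set L then takeWhile (\<lambda>z. z \<noteq> y) L @ [y] else L @ [y])"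

lemma loop_erase_snoc: "loop_erase (xs @ [y]) = loop_erase_step (loop_erase xs) y"
proof (induction xs rule: loop_erase.induct)
  case 1
  then show ?case by (simp add: loop_erase_step_def)
next
  case (2 x xs)
  then show ?case by (cases "y = x") (simp_all add: loop_erase_step_def)
qed

lemma loop_erase_append: "loop_erase (xs @ ys) = foldl loop_erase_step (loop_erase xs) ys"
proof (induction ys arbitrary: xs)
  case (Cons y ys)
  from Cons.IH[of "xs @ [y]"] show ?case by (simp add: loop_erase_snoc)
qed simp

lemma loop_erase_eq_Nil_iff [simp]: "loop_erase xs = [] \<longleftrightarrow> xs = []"
  by (cases xs) auto

lemma hd_loop_erase: "hd (loop_erase xs) = hd xs"
  by (cases xs) auto

lemma last_loop_erase: "xs \<noteq> [] \<Longrightarrow> last (loop_erase xs) = last xs"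
  by (induction xs rule: rev_induct) (auto simp: loop_erase_snoc loop_erase_step_def)

lemma distinct_loop_erase: "distinct (loop_erase xs)"
  by (induction xs rule: rev_induct)
    (auto simp: loop_erase_snoc loop_erase_step_def distinct_takeWhile dest: set_takeWhileD)

lemma loop_erase_distinct: "distinct xs \<Longrightarrow> loop_erase xs = xs"
  by (induction xs rule: rev_induct) (auto simp: loop_erase_snoc loop_erase_step_def)

lemma loop_erase_loop_erase_append: "loop_erase (loop_erase xs @ ys) = loop_erase (xs @ ys)"
  by (simp add: loop_erase_append loop_erase_distinct distinct_loop_erase)

lemma foldl_loop_erase_step_append:
  "set ys \<inter> set L = {} \<Longrightarrow> foldl loop_erase_step (L @ L') ys = L @ foldl loop_erase_step L' ys"
proof (induction ys arbitrary: L')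
  case (Cons y ys)
  then have "takeWhile (\<lambda>z. z \<noteq> y) (L @ L') = L @ takeWhile (\<lambda>z. z \<noteq> y) L'"
    by (intro takeWhile_append2) auto
  with Cons show ?case by (auto simp: loop_erase_step_def)
qed simp

lemma loop_erase_append_disjoint:
  "set ys \<inter> set (loop_erase xs) = {} \<Longrightarrow> loop_erase (xs @ ys) = loop_erase xs @ loop_erase ys"
  using foldl_loop_erase_step_append[of ys "loop_erase xs" "[]"] loop_erase_append[of "[]" ys]
  by (simp add: loop_erase_append)

lemma loop_erase_cycle: "loop_erase (v # xs @ v # ys) = loop_erase (v # ys)"
  using loop_erase_append[of "v # xs" "v # ys"] loop_erase_append[of "[v]" ys]
  by (simp add: loop_erase_step_def)

definition upto_last :: "'a set \<Rightarrow> 'a list \<Rightarrow> 'a list" where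
  "upto_last S xs = rev (dropWhile (\<lambda>y. y \<notin> S) (rev xs))"

definition after_last :: "'a set \<Rightarrow> 'a list \<Rightarrow> 'a list" where
  "after_last S xs = rev (takeWhile (\<lambda>y. y \<notin> S) (rev xs))"

lemma loop_erase_Cons_after_last: "loop_erase (x # xs) = x # loop_erase (after_last {x} xs)"
  by (simp add: after_last_def)

lemma upto_last_append_after_last: "upto_last S xs @ after_last S xs = xs"
  unfolding upto_last_def after_last_def by (metis rev_append rev_rev_ident takeWhile_dropWhile_id)

lemma set_after_last: "set (after_last S xs) \<inter> S = {}"
  by (auto simp: after_last_def dest: set_takeWhileD)

lemma last_upto_last: "upto_last S xs \<noteq> [] \<Longrightarrow> last (upto_last S xs) \<in> S"
  unfolding upto_last_def
  by (metis (mono_tags, lifting) Nil_is_rev_conv hd_dropWhile last_rev)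

lemma after_last_append:
  assumes "set ys \<inter> S = {}" "xs = [] \<or> last xs \<in> S"
  shows "after_last S (xs @ ys) = ys" "upto_last S (xs @ ys) = xs"
proof -
  have tw: "takeWhile (\<lambda>y. y \<notin> S) (rev xs) = []"
    and dw: "dropWhile (\<lambda>y. y \<notin> S) (rev xs) = rev xs"
    using assms(2) by (cases "rev xs"; auto simp: last_rev[symmetric] hd_rev)+
  have "takeWhile (\<lambda>y. y \<notin> S) (rev ys @ rev xs) = rev ys @ takeWhile (\<lambda>y. y \<notin> S) (rev xs)"
    by (rule takeWhile_append2) (use assms(1) in auto)
  moreover have "dropWhile (\<lambda>y. y \<notin> S) (rev ys @ rev xs) = dropWhile (\<lambda>y. y \<notin> S) (rev xs)"
    by (rule dropWhile_append2) (use assms(1) in auto)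
  ultimately show "after_last S (xs @ ys) = ys" "upto_last S (xs @ ys) = xs"
    using tw dw by (simp_all add: after_last_def upto_last_def)
qed

lemma loop_erase_split:
  assumes "k < length (loop_erase xs)"
  shows "\<exists>ys zs. xs = ys @ zs \<and> loop_erase ys = take k (loop_erase xs) \<and>
           set zs \<inter> set (take k (loop_erase xs)) = {}"
  using assms
proof (induction xs arbitrary: k rule: loop_erase.induct)
  case (2 x xs)
  define r where "r = upto_last {x} xs"
  define s where "s = after_last {x} xs"
  have xs: "xs = r @ s" and x_s: "x \<notin> set s"
    using upto_last_append_after_last[of "{x}" xs] set_after_last[of "{x}" xs]
    by (auto simp: r_def s_def)
  have IH: "\<exists>ys zs. s = ys @ zs \<and> loop_erase ys = take k (loop_erase s) \<and>
      set zs \<inter> set (take k (loop_erase s)) = {}" if "k < length (loop_erase s)" for k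
    using "2.IH" that by (simp add: s_def after_last_def)
  have LE: "loop_erase (x # xs) = x # loop_erase s"
    unfolding s_def by (rule loop_erase_Cons_after_last)
  show ?case
  proof (cases k)
    case 0
    then show ?thesis by auto
  next
    case (Suc k')
    with "2.prems" LE have "k' < length (loop_erase s)" by simp
    then obtain s1 s2 where s: "s = s1 @ s2"
      and LE1: "loop_erase s1 = take k' (loop_erase s)"
      and disj: "set s2 \<inter> set (take k' (loop_erase s)) = {}"
      using IH by blast
    have "after_last {x} (r @ s1) = s1"
      using x_s s last_upto_last[of "{x}" xs] by (intro after_last_append) (auto simp: r_def)
    then have "loop_erase (x # r @ s1) = x # loop_erase s1"
      by (metis loop_erase_Cons_after_last)
    then have "loop_erase (x # r @ s1) = take k (loop_erase (x # xs))"
      using LE LE1 Suc by (simp del: loop_erase.simps)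
    moreover have "set s2 \<inter> set (take k (loop_erase (x # xs))) = {}"
      using disj x_s s LE Suc by auto
    ultimately show ?thesis
      using xs s by (intro exI[of _ "x # r @ s1"] exI[of _ s2]) simp
  qed
qed simp

section \<open>Exchanging the tails of a path and an excursion\<close>

definition cut_index :: "'a list \<Rightarrow> 'a list \<Rightarrow> nat" where
  "cut_index a e = (LEAST k. loop_erase a ! k \<in> set e)"

text \<open>
  With v the first vertex of the loop erasure of a visited by e, the part of a after its last
  visit to the vertices preceding v in the loop erasure (this part starts at v) is exchanged with
  the part of e from its first visit to v.
\<close>
definition excursion_swap :: "'a list \<times> 'a list \<Rightarrow> 'a list \<times> 'a list" where
  "excursion_swap =
     (\<lambda>(a, e). let g = loop_erase a; i = cut_index a e; S = set (take i g); v = g ! i in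
       (upto_last S a @ dropWhile (\<lambda>z. z \<noteq> v) e, takeWhile (\<lambda>z. z \<noteq> v) e @ after_last S a))"

text \<open>The hypotheses are symmetric in a2 and e2, which makes the swap an involution.\<close>
lemma excursion_swap_eqI:
  assumes a: "a = a1 @ v # a2" and e: "e = e1 @ v # e2" and v_e1: "v \<notin> set e1"
    and disj_a2: "set (v # a2) \<inter> set (loop_erase a1) = {}"
    and disj_e: "set e \<inter> set (loop_erase a1) = {}"
  shows "excursion_swap (a, e) = (a1 @ v # e2, e1 @ v # a2)"
proof -
  define L where "L = loop_erase a1"
  have g: "loop_erase a = L @ v # loop_erase (after_last {v} a2)"
    using loop_erase_append_disjoint[OF disj_a2] a
    by (simp add: L_def loop_erase_Cons_after_last del: loop_erase.simps)
  have i: "cut_index a e = length L"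
    unfolding cut_index_def
  proof (rule Least_equality)
    show "loop_erase a ! length L \<in> set e" using g e by simp
    show "length L \<le> k" if "loop_erase a ! k \<in> set e" for k
      using that g disj_e by (cases "k < length L") (auto simp: L_def nth_append)
  qed
  have "a1 = [] \<or> last a1 \<in> set L"
    using last_in_set[of L] by (auto simp: L_def last_loop_erase)
  then have "after_last (set L) a = v # a2" "upto_last (set L) a = a1"
    using after_last_append[OF disj_a2[folded L_def]] a by auto
  moreover have "takeWhile (\<lambda>z. z \<noteq> v) e = e1" "dropWhile (\<lambda>z. z \<noteq> v) e = v # e2"
    using v_e1 e by (auto simp: takeWhile_tail dropWhile_append3)
  ultimately show ?thesis
    using g i by (simp add: excursion_swap_def Let_def)
qed

lemma excursion_swap_split:
  assumes "a \<noteq> []" "last a \<in> set e"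
  obtains a1 v a2 e1 e2 where "a = a1 @ v # a2" "e = e1 @ v # e2" "v \<notin> set e1"
    "set (v # a2) \<inter> set (loop_erase a1) = {}" "set e \<inter> set (loop_erase a1) = {}"
proof -
  define g where "g = loop_erase a"
  define i where "i = (LEAST k. g ! k \<in> set e)"
  have "g ! (length g - 1) \<in> set e"
    using assms last_loop_erase[of a] by (simp add: g_def last_conv_nth)
  then have v_e: "g ! i \<in> set e" and "i \<le> length g - 1"
    unfolding i_def by (auto intro: LeastI Least_le)
  moreover have "g \<noteq> []" using assms by (simp add: g_def)
  ultimately have i: "i < length g" by (cases g) auto
  have "g ! k \<notin> set e" if "k < i" for k
    using not_less_Least[OF that[unfolded i_def]] .
  then have disj_e: "set e \<inter> set (take i g) = {}"
    by (auto simp: in_set_conv_nth[of _ "take i g"])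
  obtain a1 b where a: "a = a1 @ b" and L: "loop_erase a1 = take i g"
    and disj_b: "set b \<inter> set (take i g) = {}"
    using loop_erase_split[OF i[unfolded g_def], folded g_def] by blast
  have "g = take i g @ loop_erase b"
    using loop_erase_append_disjoint[of b a1] disj_b L a by (simp add: g_def del: loop_erase.simps)
  then have "loop_erase b = drop i g"
    by (metis append_take_drop_id same_append_eq)
  then obtain a2 where b: "b = g ! i # a2"
    using i hd_loop_erase[of b] by (cases b) (auto simp: hd_drop_conv_nth)
  obtain e1 e2 where "e = e1 @ g ! i # e2" "g ! i \<notin> set e1"
    using split_list_first[OF v_e] by blast
  then show ?thesis
    using that[of a1 "g ! i" a2 e1 e2] a b L disj_b disj_e by simp
qed

lemma loop_erase_swap:
  assumes "a = a1 @ v # a2" "e = e1 @ v # e2"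
    "set (v # a2) \<inter> set (loop_erase a1) = {}" "set e \<inter> set (loop_erase a1) = {}"
  shows "loop_erase (a1 @ v # e2) = loop_erase (a @ e)"
proof -
  have "loop_erase (a1 @ v # a2 @ e) = loop_erase a1 @ loop_erase (v # (a2 @ e1) @ v # e2)"
    by (subst loop_erase_append_disjoint) (use assms in auto)
  moreover have "loop_erase (a1 @ v # e2) = loop_erase a1 @ loop_erase (v # e2)"
    by (rule loop_erase_append_disjoint) (use assms in auto)
  ultimately show ?thesis
    using assms(1) loop_erase_cycle[of v "a2 @ e1" e2] by (simp del: loop_erase.simps)
qed

fun path_weight :: "('a \<Rightarrow> 'a \<Rightarrow> real) \<Rightarrow> 'a list \<Rightarrow> real" where
  "path_weight p (x # y # ys) = p x y * path_weight p (y # ys)"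
| "path_weight p _ = 1"

lemma path_weight_conv_prod:
  "path_weight p xs = (\<Prod>i < length xs - 1. p (xs ! i) (xs ! Suc i))"
  by (induction p xs rule: path_weight.induct)
    (simp_all add: prod.lessThan_Suc_shift del: prod.lessThan_Suc)

lemma path_weight_nonneg: "(\<And>x y. 0 \<le> p x y) \<Longrightarrow> 0 \<le> path_weight p xs"
  by (induction p xs rule: path_weight.induct) auto

lemma path_weight_append_Cons:
  "path_weight p (xs @ v # ys) = path_weight p (xs @ [v]) * path_weight p (v # ys)"
  by (induction xs rule: induct_list012) simp_all

lemma path_weight_append:
  assumes "xs \<noteq> []"
  shows "path_weight p (xs @ ys) = path_weight p xs * path_weight p (last xs # ys)"
proof -
  obtain xs' x where "xs = xs' @ [x]"
    using assms by (metis append_butlast_last_id)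
  then show ?thesis
    using path_weight_append_Cons[of p xs' x ys] by simp
qed

lemma path_weight_exchange:
  "path_weight p (a1 @ v # e2) * path_weight p (w # e1 @ v # a2)
     = path_weight p (a1 @ v # a2) * path_weight p (w # e1 @ v # e2)"
  using path_weight_append_Cons[of p a1 v e2] path_weight_append_Cons[of p a1 v a2]
    path_weight_append_Cons[of p "w # e1" v a2] path_weight_append_Cons[of p "w # e1" v e2]
  by (simp only: append_Cons mult_ac)

definition first_visit_paths :: "'a \<Rightarrow> 'a \<Rightarrow> 'a list set" where
  "first_visit_paths x0 w = {a. a \<noteq> [] \<and> hd a = x0 \<and> last a = w \<and> w \<notin> set (butlast a)}"

definition excursions :: "'a \<Rightarrow> 'a list set" where
  "excursions w = {e. e \<noteq> [] \<and> last e = w \<and> w \<notin> set (butlast e)}"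

lemma excursion_swap_props:
  assumes "z \<in> first_visit_paths x0 w \<times> excursions w"
  shows "excursion_swap z \<in> first_visit_paths x0 w \<times> excursions w"
    and "excursion_swap (excursion_swap z) = z"
    and "loop_erase (fst (excursion_swap z)) = loop_erase (fst z @ snd z)"
    and "path_weight p (fst (excursion_swap z)) * path_weight p (w # snd (excursion_swap z))
           = path_weight p (fst z) * path_weight p (w # snd z)"
proof -
  obtain a e where z: "z = (a, e)" by (cases z)
  have a: "a \<noteq> []" "hd a = x0" "last a = w" "w \<notin> set (butlast a)"
    and e: "e \<noteq> []" "last e = w" "w \<notin> set (butlast e)"
    using assms by (auto simp: z first_visit_paths_def excursions_def)
  then have "last a \<in> set e" by (metis last_in_set)
  with a(1) obtain a1 v a2 e1 e2 where A: "a = a1 @ v # a2" and E: "e = e1 @ v # e2"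
    and v_e1: "v \<notin> set e1" and disj_a2: "set (v # a2) \<inter> set (loop_erase a1) = {}"
    and disj_e: "set e \<inter> set (loop_erase a1) = {}"
    by (rule excursion_swap_split)
  have swap: "excursion_swap (a, e) = (a1 @ v # e2, e1 @ v # a2)"
    by (rule excursion_swap_eqI[OF A E v_e1 disj_a2 disj_e])
  have "excursion_swap (a1 @ v # e2, e1 @ v # a2) = (a1 @ v # a2, e1 @ v # e2)"
    by (rule excursion_swap_eqI) (use v_e1 disj_a2 disj_e E in auto)
  then show "excursion_swap (excursion_swap z) = z"
    unfolding z swap by (simp add: A E)
  have "hd (a1 @ v # e2) = x0"
    using a(2) A by (cases a1) auto
  moreover have "w \<notin> set (butlast (a1 @ v # e2))" "w \<notin> set (butlast (e1 @ v # a2))"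
    using a(4) e(3) by (auto simp: A E butlast_append)
  ultimately show "excursion_swap z \<in> first_visit_paths x0 w \<times> excursions w"
    using a(3) e(2) unfolding z swap by (simp add: first_visit_paths_def excursions_def A E)
  show "loop_erase (fst (excursion_swap z)) = loop_erase (fst z @ snd z)"
    using loop_erase_swap[OF A E disj_a2 disj_e] unfolding z swap by simp
  show "path_weight p (fst (excursion_swap z)) * path_weight p (w # snd (excursion_swap z))
      = path_weight p (fst z) * path_weight p (w # snd z)"
    unfolding z swap by (simp add: A E path_weight_exchange)
qed

lemma bij_betw_excursion_swap:
  "bij_betw excursion_swap (first_visit_paths x0 w \<times> excursions w) (first_visit_paths x0 w \<times> excursions w)"
  by (rule bij_betwI[where g = excursion_swap]) (auto simp: excursion_swap_props)

section \<open>Weighted sums over paths\<close>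

lemma nn_integral_count_space_prod:
  fixes A :: "'a::countable set" and B :: "'b::countable set"
  shows "(\<integral>\<^sup>+z. f z \<partial>count_space (A \<times> B))
    = (\<integral>\<^sup>+x. \<integral>\<^sup>+y. f (x, y) \<partial>count_space B \<partial>count_space A)"
proof -
  interpret B: sigma_finite_measure "count_space B"
    by (rule sigma_finite_measure_count_space_countable) simp
  have "(\<integral>\<^sup>+x. \<integral>\<^sup>+y. f (x, y) \<partial>count_space B \<partial>count_space A)
      = integral\<^sup>N (count_space A \<Otimes>\<^sub>M count_space B) f"
    by (rule B.nn_integral_fst) (simp add: pair_measure_countable)
  then show ?thesis by (simp add: pair_measure_countable)
qed

definition visit_paths :: "'a \<Rightarrow> 'a \<Rightarrow> nat \<Rightarrow> 'a list set" where
  "visit_paths x0 w N = {a. a \<noteq> [] \<and> hd a = x0 \<and> last a = w \<and> count_list (tl a) w = N}"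

lemma visit_paths_one:
  assumes "x0 \<noteq> w"
  shows "visit_paths x0 w 1 = first_visit_paths x0 w"
proof -
  have "count_list (tl a) w = 1 \<longleftrightarrow> w \<notin> set (butlast a)"
    if a_ne: "a \<noteq> []" and hd_a: "hd a = x0" and last_a: "last a = w" for a
  proof -
    obtain t where a: "a = x0 # t" using a_ne hd_a by (cases a) auto
    with assms last_a have t: "t \<noteq> []" "t = butlast t @ [w]"
      by (auto intro: append_butlast_last_id[symmetric])
    then have "count_list (tl a) w = count_list (butlast t) w + 1"
      by (metis a count_list_append count_list.simps list.sel(3) add_0 add.commute)
    moreover have "butlast a = x0 # butlast t" using a t by simp
    ultimately show ?thesis
      using assms by (simp add: count_list_0_iff)
  qed
  then show ?thesis
    by (auto simp: visit_paths_def first_visit_paths_def)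
qed

lemma visit_paths_append_eq_Nil:
  assumes "a \<in> visit_paths x0 w N" "a @ us \<in> visit_paths x0 w N"
  shows "us = []"
proof (rule ccontr)
  assume us: "us \<noteq> []"
  from assms have "count_list us w = 0"
    by (auto simp: visit_paths_def)
  moreover have "last us = w"
    using assms(2) us by (simp add: visit_paths_def)
  ultimately show False
    using us last_in_set by (metis count_list_0_iff)
qed

lemma excursions_snoc: "v @ [w] \<in> excursions w \<longleftrightarrow> w \<notin> set v"
  by (simp add: excursions_def)

lemma excursions_obtain_snoc:
  assumes "e \<in> excursions w"
  obtains v where "e = v @ [w]" "w \<notin> set v"
proof -
  from assms have e: "e \<noteq> []" "last e = w" "w \<notin> set (butlast e)"
    by (auto simp: excursions_def)
  show thesis
    by (rule that[of "butlast e"]) (use e append_butlast_last_id[OF e(1)] in auto)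
qed

lemma append_excursion_visit_paths:
  assumes "a \<in> visit_paths x0 w N" "e \<in> excursions w"
  shows "a @ e \<in> visit_paths x0 w (Suc N)"
proof -
  obtain v where "e = v @ [w]" "w \<notin> set v"
    using assms(2) by (rule excursions_obtain_snoc)
  with assms(1) show ?thesis
    by (auto simp: visit_paths_def count_list_0_iff)
qed

lemma visit_paths_Suc_split:
  assumes "x \<in> visit_paths x0 w (Suc N)" "N \<ge> 1"
  obtains a e where "x = a @ e" "a \<in> visit_paths x0 w N" "e \<in> excursions w"
proof -
  obtain t where x: "x = x0 # t" and t: "last (x0 # t) = w" "count_list t w = Suc N"
    using assms(1) by (cases x) (auto simp: visit_paths_def)
  then have "t \<noteq> []" by auto
  then obtain t' where t': "t = t' @ [w]"
    using t(1) by (metis append_butlast_last_id last_ConsR)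
  then have count: "count_list t' w = N"
    using t(2) by simp
  then have "w \<in> set t'"
    using assms(2) by (metis count_notin not_one_le_zero)
  then obtain u v where uv: "t' = u @ w # v" and w_v: "w \<notin> set v"
    using split_list_last by metis
  show ?thesis
  proof
    show "x = (x0 # u @ [w]) @ v @ [w]"
      by (simp add: x t' uv)
    show "x0 # u @ [w] \<in> visit_paths x0 w N"
      using count uv w_v by (simp add: visit_paths_def count_list_0_iff)
    show "v @ [w] \<in> excursions w"
      using w_v by (rule excursions_snoc[THEN iffD2])
  qed
qed

lemma inj_on_append_visit_paths:
  "inj_on (\<lambda>(a, e). a @ e) (visit_paths x0 w N \<times> excursions w)"
proof (rule inj_onI, clarify)
  fix a e a' e'
  assume "a \<in> visit_paths x0 w N" "a' \<in> visit_paths x0 w N" "a @ e = a' @ e'"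
  moreover from \<open>a @ e = a' @ e'\<close> obtain us where "a = a' @ us \<or> a' = a @ us"
    by (auto simp: append_eq_append_conv2)
  ultimately have "a = a'"
    using visit_paths_append_eq_Nil by fastforce
  with \<open>a @ e = a' @ e'\<close> show "a = a' \<and> e = e'"
    by simp
qed

lemma bij_betw_append_visit_paths:
  assumes "N \<ge> 1"
  shows "bij_betw (\<lambda>(a, e). a @ e) (visit_paths x0 w N \<times> excursions w) (visit_paths x0 w (Suc N))"
proof (rule bij_betw_imageI[OF inj_on_append_visit_paths])
  show "(\<lambda>(a, e). a @ e) ` (visit_paths x0 w N \<times> excursions w) = visit_paths x0 w (Suc N)"
  proof (intro equalityI subsetI)
    fix x
    assume "x \<in> (\<lambda>(a, e). a @ e) ` (visit_paths x0 w N \<times> excursions w)"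
    then show "x \<in> visit_paths x0 w (Suc N)"
      by (auto intro: append_excursion_visit_paths)
  next
    fix x
    assume "x \<in> visit_paths x0 w (Suc N)"
    then obtain a e where "x = a @ e" "a \<in> visit_paths x0 w N" "e \<in> excursions w"
      by (rule visit_paths_Suc_split[OF _ assms])
    then show "x \<in> (\<lambda>(a, e). a @ e) ` (visit_paths x0 w N \<times> excursions w)"
      by force
  qed
qed

definition visit_sum ::
  "('a::countable \<Rightarrow> 'a \<Rightarrow> real) \<Rightarrow> 'a \<Rightarrow> 'a \<Rightarrow> nat \<Rightarrow> ('a list \<Rightarrow> ennreal) \<Rightarrow> ennreal" where
  "visit_sum p x0 w N g =
     (\<integral>\<^sup>+a. ennreal (path_weight p a) * g (loop_erase a) \<partial>count_space (visit_paths x0 w N))"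

definition excursion_mass :: "('a::countable \<Rightarrow> 'a \<Rightarrow> real) \<Rightarrow> 'a \<Rightarrow> ennreal" where
  "excursion_mass p w = (\<integral>\<^sup>+e. ennreal (path_weight p (w # e)) \<partial>count_space (excursions w))"

definition excursion_extend ::
  "('a::countable \<Rightarrow> 'a \<Rightarrow> real) \<Rightarrow> 'a \<Rightarrow> ('a list \<Rightarrow> ennreal) \<Rightarrow> 'a list \<Rightarrow> ennreal" where
  "excursion_extend p w g d =
     (\<integral>\<^sup>+e. ennreal (path_weight p (w # e)) * g (loop_erase (d @ e)) \<partial>count_space (excursions w))"

lemma excursion_extend_loop_erase:
  assumes "\<And>x y. 0 \<le> p x y"
  shows "ennreal (path_weight p a) * excursion_extend p w g (loop_erase a)
    = (\<integral>\<^sup>+e. ennreal (path_weight p a * path_weight p (w # e)) * g (loop_erase (a @ e))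
         \<partial>count_space (excursions w))"
  unfolding excursion_extend_def
  by (subst nn_integral_cmult[symmetric])
    (simp_all add: loop_erase_loop_erase_append ennreal_mult path_weight_nonneg assms mult.assoc)

lemma visit_sum_Suc:
  assumes "\<And>x y. 0 \<le> p x y" and "N \<ge> 1"
  shows "visit_sum p x0 w (Suc N) g = visit_sum p x0 w N (excursion_extend p w g)"
proof -
  have "visit_sum p x0 w (Suc N) g =
      (\<integral>\<^sup>+z. ennreal (path_weight p (fst z @ snd z)) * g (loop_erase (fst z @ snd z))
         \<partial>count_space (visit_paths x0 w N \<times> excursions w))"
    unfolding visit_sum_def
    by (subst nn_integral_bij_count_space[OF bij_betw_append_visit_paths[OF assms(2)], symmetric])
      (simp add: case_prod_beta)
  also have "\<dots> = visit_sum p x0 w N (excursion_extend p w g)"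
    unfolding visit_sum_def nn_integral_count_space_prod
  proof (rule nn_integral_cong)
    fix a
    assume "a \<in> space (count_space (visit_paths x0 w N))"
    then have "a \<noteq> []" "last a = w" by (auto simp: visit_paths_def)
    then show "(\<integral>\<^sup>+e. ennreal (path_weight p (fst (a, e) @ snd (a, e))) *
          g (loop_erase (fst (a, e) @ snd (a, e))) \<partial>count_space (excursions w))
        = ennreal (path_weight p a) * excursion_extend p w g (loop_erase a)"
      by (simp add: excursion_extend_loop_erase[OF assms(1)] path_weight_append)
  qed
  finally show ?thesis .
qed

lemma visit_sum_one_excursion_extend:
  assumes "\<And>x y. 0 \<le> p x y" and "x0 \<noteq> w"
  shows "visit_sum p x0 w 1 (excursion_extend p w g) = excursion_mass p w * visit_sum p x0 w 1 g"
proof -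
  let ?F = "\<lambda>z. ennreal (path_weight p (fst z) * path_weight p (w # snd z)) * g (loop_erase (fst z))"
  let ?C = "count_space (first_visit_paths x0 w \<times> excursions w)"
  have "visit_sum p x0 w 1 (excursion_extend p w g) =
      (\<integral>\<^sup>+z. ennreal (path_weight p (fst z) * path_weight p (w # snd z)) *
         g (loop_erase (fst z @ snd z)) \<partial>?C)"
    unfolding visit_sum_def visit_paths_one[OF assms(2)] nn_integral_count_space_prod
    by (simp add: excursion_extend_loop_erase[OF assms(1)])
  also have "\<dots> = (\<integral>\<^sup>+z. ?F (excursion_swap z) \<partial>?C)"
    by (intro nn_integral_cong) (simp add: excursion_swap_props)
  also have "\<dots> = (\<integral>\<^sup>+z. ?F z \<partial>?C)"
    by (rule nn_integral_bij_count_space[OF bij_betw_excursion_swap])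
  also have "\<dots> = (\<integral>\<^sup>+a. excursion_mass p w * (ennreal (path_weight p a) * g (loop_erase a))
      \<partial>count_space (first_visit_paths x0 w))"
    unfolding nn_integral_count_space_prod excursion_mass_def
    by (intro nn_integral_cong, subst nn_integral_multc[symmetric])
      (simp_all add: ennreal_mult path_weight_nonneg assms(1) mult_ac)
  also have "\<dots> = excursion_mass p w * visit_sum p x0 w 1 g"
    unfolding visit_sum_def visit_paths_one[OF assms(2)] by (rule nn_integral_cmult) simp
  finally show ?thesis .
qed

lemma visit_sum_eq_power:
  assumes "\<And>x y. 0 \<le> p x y" and "x0 \<noteq> w" and "N \<ge> 1"
  shows "visit_sum p x0 w N g = excursion_mass p w ^ (N - 1) * visit_sum p x0 w 1 g"
  using assms(3)
proof (induction N arbitrary: g rule: nat_induct_at_least)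
  case (Suc N)
  have "visit_sum p x0 w (Suc N) g = excursion_mass p w ^ (N - 1) * visit_sum p x0 w 1 (excursion_extend p w g)"
    using Suc by (simp add: visit_sum_Suc assms(1))
  also have "\<dots> = excursion_mass p w ^ (N - 1) * (excursion_mass p w * visit_sum p x0 w 1 g)"
    by (simp only: visit_sum_one_excursion_extend[OF assms(1,2)])
  also have "\<dots> = excursion_mass p w ^ (Suc N - 1) * visit_sum p x0 w 1 g"
    using Suc.hyps by (cases N) (simp_all add: algebra_simps)
  finally show ?case .
qed simp

section \<open>Hitting times and cylinder events\<close>

text \<open>Visits at the times 1, ..., t: time 0 is not counted, as in the definition of T_1.\<close>
fun visit_count :: "(nat \<Rightarrow> 'w \<Rightarrow> 'a option) \<Rightarrow> 'a \<Rightarrow> 'w \<Rightarrow> nat \<Rightarrow> nat" where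
  "visit_count X w \<omega> 0 = 0"
| "visit_count X w \<omega> (Suc t) = visit_count X w \<omega> t + (if X (Suc t) \<omega> = Some w then 1 else 0)"

lemma visit_count_mono: "s \<le> t \<Longrightarrow> visit_count X w \<omega> s \<le> visit_count X w \<omega> t"
  by (induction t rule: dec_induct) auto

lemma visit_count_const:
  "s \<le> t \<Longrightarrow> (\<And>m. s < m \<Longrightarrow> m \<le> t \<Longrightarrow> X m \<omega> \<noteq> Some w) \<Longrightarrow>
    visit_count X w \<omega> t = visit_count X w \<omega> s"
  by (induction t rule: dec_induct) auto

lemma visit_count_less:
  assumes "s < t" "X t \<omega> = Some w"
  shows "visit_count X w \<omega> s < visit_count X w \<omega> t"
proof -
  obtain t' where t: "t = Suc t'" using assms(1) by (cases t) auto
  then have "visit_count X w \<omega> s \<le> visit_count X w \<omega> t'"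
    using assms(1) by (intro visit_count_mono) simp
  then show ?thesis using assms(2) t by simp
qed

lemma hit_time_enatD:
  assumes "hit_time X w N \<omega> = enat t"
  shows "visit_count X w \<omega> t = N \<and> (N \<ge> 1 \<longrightarrow> X t \<omega> = Some w)"
  using assms
proof (induction N arbitrary: t)
  case 0
  then show ?case by (simp add: zero_enat_def)
next
  case (Suc N)
  then obtain s where s: "hit_time X w N \<omega> = enat s"
    by (cases "hit_time X w N \<omega>") auto
  with Suc.prems have ex: "\<exists>m>s. X m \<omega> = Some w" and t: "t = (LEAST m. m > s \<and> X m \<omega> = Some w)"
    by (auto split: if_splits)
  have t_hit: "s < t \<and> X t \<omega> = Some w"
    unfolding t using ex by (rule LeastI_ex)
  have "X m \<omega> \<noteq> Some w" if "s < m" "m < t" for m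
    using not_less_Least[of m "\<lambda>m. m > s \<and> X m \<omega> = Some w"] that t by auto
  then have "visit_count X w \<omega> (t - 1) = visit_count X w \<omega> s"
    using t_hit by (intro visit_count_const) auto
  moreover have "visit_count X w \<omega> s = N"
    using Suc.IH[OF s] by simp
  ultimately show ?case
    using t_hit by (cases t) auto
qed

lemma hit_time_finite: "N \<le> visit_count X w \<omega> t \<Longrightarrow> hit_time X w N \<omega> \<noteq> \<infinity>"
proof (induction N)
  case (Suc N)
  then have "hit_time X w N \<omega> \<noteq> \<infinity>"
    by simp
  then obtain s where s: "hit_time X w N \<omega> = enat s"
    by (auto simp: not_infinity_eq)
  then have "visit_count X w \<omega> s = N"
    by (simp add: hit_time_enatD)
  with Suc.prems have less: "visit_count X w \<omega> s < visit_count X w \<omega> t"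
    by simp
  have "s < t"
  proof (rule ccontr)
    assume "\<not> s < t"
    then have "visit_count X w \<omega> t \<le> visit_count X w \<omega> s"
      by (simp add: visit_count_mono)
    with less show False by simp
  qed
  have "\<exists>m>s. X m \<omega> = Some w"
  proof (rule ccontr)
    assume "\<not> (\<exists>m>s. X m \<omega> = Some w)"
    then have "visit_count X w \<omega> t = visit_count X w \<omega> s"
      using \<open>s < t\<close> by (intro visit_count_const) auto
    with less show False by simp
  qed
  then show ?case
    using s by simp
qed simp

lemma hit_time_eq_enat_iff:
  assumes "N \<ge> 1"
  shows "hit_time X w N \<omega> = enat t \<longleftrightarrow> X t \<omega> = Some w \<and> visit_count X w \<omega> t = N"
proof
  assume "hit_time X w N \<omega> = enat t"
  then show "X t \<omega> = Some w \<and> visit_count X w \<omega> t = N"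
    using hit_time_enatD[of X w N \<omega> t] assms by simp
next
  assume t: "X t \<omega> = Some w \<and> visit_count X w \<omega> t = N"
  then obtain s where s: "hit_time X w N \<omega> = enat s"
    using hit_time_finite[of N X w \<omega> t] by (auto simp: not_infinity_eq)
  then have "X s \<omega> = Some w" "visit_count X w \<omega> s = N"
    using hit_time_enatD[OF s] assms by auto
  with t have "s = t"
    using visit_count_less[of s t X \<omega> w] visit_count_less[of t s X \<omega> w]
    by (cases s t rule: linorder_cases) auto
  with s show "hit_time X w N \<omega> = enat t"
    by simp
qed

definition cylinder :: "'w measure \<Rightarrow> (nat \<Rightarrow> 'w \<Rightarrow> 'a option) \<Rightarrow> 'a list \<Rightarrow> 'w set" where
  "cylinder M X xs = {\<omega> \<in> space M. \<forall>i < length xs. X i \<omega> = Some (xs ! i)}"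

text \<open>The starting point is left free: cylinders of paths not starting at x0 are null sets.\<close>
definition hit_paths :: "'a \<Rightarrow> nat \<Rightarrow> 'a list set" where
  "hit_paths w N = {xs. xs \<noteq> [] \<and> last xs = w \<and> count_list (tl xs) w = N}"

lemma visit_count_cylinder:
  assumes "\<omega> \<in> cylinder M X xs" "t < length xs"
  shows "visit_count X w \<omega> t = count_list (take t (tl xs)) w"
  using assms(2)
proof (induction t)
  case (Suc t)
  then have "X (Suc t) \<omega> = Some (xs ! Suc t)"
    using assms(1) by (simp add: cylinder_def)
  moreover have "take (Suc t) (tl xs) = take t (tl xs) @ [xs ! Suc t]"
    using Suc.prems by (simp add: take_Suc_conv_app_nth nth_tl)
  ultimately show ?case
    using Suc by simp
qed simp

lemma path_upto_cylinder:
  assumes "\<omega> \<in> cylinder M X xs" "xs \<noteq> []"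
  shows "path_upto X (length xs - 1) \<omega> = xs"
  using assms by (intro nth_equalityI) (auto simp: path_upto_def cylinder_def simp del: upt_Suc)

lemma hit_time_cylinder:
  assumes "xs \<in> hit_paths w N" "N \<ge> 1" "\<omega> \<in> cylinder M X xs"
  shows "hit_time X w N \<omega> = enat (length xs - 1)"
proof -
  have xs: "xs \<noteq> []" "last xs = w" "count_list (tl xs) w = N"
    using assms(1) by (auto simp: hit_paths_def)
  then have "X (length xs - 1) \<omega> = Some w"
    using assms(3) by (simp add: cylinder_def last_conv_nth)
  moreover have "visit_count X w \<omega> (length xs - 1) = N"
    using visit_count_cylinder[OF assms(3), of "length xs - 1"] xs by simp
  ultimately show ?thesis
    using assms(2) by (simp add: hit_time_eq_enat_iff)
qed

lemma disjoint_family_on_cylinder: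
  assumes "N \<ge> 1"
  shows "disjoint_family_on (cylinder M X) (hit_paths w N)"
  unfolding disjoint_family_on_def
proof (intro ballI impI)
  fix xs ys
  assume xs: "xs \<in> hit_paths w N" and ys: "ys \<in> hit_paths w N" and "xs \<noteq> ys"
  show "cylinder M X xs \<inter> cylinder M X ys = {}"
  proof (rule ccontr)
    assume "cylinder M X xs \<inter> cylinder M X ys \<noteq> {}"
    then obtain \<omega> where \<omega>: "\<omega> \<in> cylinder M X xs" "\<omega> \<in> cylinder M X ys" by blast
    then have "length xs - 1 = length ys - 1"
      using hit_time_cylinder[OF xs assms \<omega>(1)] hit_time_cylinder[OF ys assms \<omega>(2)] by simp
    moreover have "xs \<noteq> []" "ys \<noteq> []"
      using xs ys by (auto simp: hit_paths_def)
    ultimately have "xs = ys"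
      using path_upto_cylinder[OF \<omega>(1)] path_upto_cylinder[OF \<omega>(2)] by metis
    with \<open>xs \<noteq> ys\<close> show False ..
  qed
qed

lemma sub_markov_chain_Some_before:
  assumes "sub_markov_chain M X p x0" "\<omega> \<in> space M" "i \<le> j" "X j \<omega> \<noteq> None"
  shows "X i \<omega> \<noteq> None"
  using assms(3,4)
proof (induction j rule: dec_induct)
  case (step n)
  have "X n \<omega> \<noteq> None"
  proof
    assume "X n \<omega> = None"
    then have "X (Suc n) \<omega> = None"
      using assms(1,2) by (simp add: sub_markov_chain_def)
    with step.prems show False by simp
  qed
  then show ?case
    by (rule step.IH)
qed

lemma hit_event_eq_UN_cylinder:
  assumes chain: "sub_markov_chain M X p x0" and N: "N \<ge> 1"
  shows "{\<omega>\<in>space M. hit_time X w N \<omega> < \<infinity> \<and>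
           Q (loop_erase (path_upto X (the_enat (hit_time X w N \<omega>)) \<omega>))}
     = (\<Union>xs\<in>{xs \<in> hit_paths w N. Q (loop_erase xs)}. cylinder M X xs)" (is "?E = ?U")
proof (intro equalityI subsetI)
  fix \<omega>
  assume "\<omega> \<in> ?E"
  then have \<omega>: "\<omega> \<in> space M" and fin: "hit_time X w N \<omega> < \<infinity>"
    and Q: "Q (loop_erase (path_upto X (the_enat (hit_time X w N \<omega>)) \<omega>))"
    by auto
  from fin obtain t where t: "hit_time X w N \<omega> = enat t"
    by (rule less_infinityE)
  with Q have Q: "Q (loop_erase (path_upto X t \<omega>))"
    by simp
  have X_t: "X t \<omega> = Some w" "visit_count X w \<omega> t = N"
    using t N by (simp_all add: hit_time_eq_enat_iff)
  define xs where "xs = path_upto X t \<omega>"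
  have "X i \<omega> \<noteq> None" if "i \<le> t" for i
    using sub_markov_chain_Some_before[OF chain \<omega> that] X_t by simp
  then have cyl: "\<omega> \<in> cylinder M X xs"
    using \<omega> by (auto simp: cylinder_def xs_def path_upto_def simp del: upt_Suc)
  have len: "length xs = Suc t"
    by (simp add: xs_def path_upto_def)
  then have "xs \<in> hit_paths w N"
    using X_t visit_count_cylinder[OF cyl, of t w]
    by (auto simp: hit_paths_def last_conv_nth xs_def path_upto_def simp del: upt_Suc)
  with Q cyl show "\<omega> \<in> ?U"
    by (auto simp: xs_def)
next
  fix \<omega>
  assume "\<omega> \<in> ?U"
  then obtain xs where xs: "xs \<in> hit_paths w N" "Q (loop_erase xs)"
    and cyl: "\<omega> \<in> cylinder M X xs"
    by blast
  moreover have "xs \<noteq> []"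
    using xs by (simp add: hit_paths_def)
  ultimately show "\<omega> \<in> ?E"
    using hit_time_cylinder[OF xs(1) N cyl] path_upto_cylinder[OF cyl]
    by (simp add: cylinder_def)
qed

lemma
  assumes "sub_markov_chain M X p x0"
  shows sets_cylinder: "cylinder M X xs \<in> sets M"
    and emeasure_cylinder:
      "xs \<noteq> [] \<Longrightarrow> emeasure M (cylinder M X xs) = (if hd xs = x0 then ennreal (path_weight p xs) else 0)"
proof -
  interpret prob_space M
    using assms by (simp add: sub_markov_chain_def)
  have [measurable]: "X n \<in> measurable M (count_space UNIV)" for n
    using assms by (simp add: sub_markov_chain_def)
  show sets: "cylinder M X xs \<in> sets M"
    unfolding cylinder_def by measurable
  assume "xs \<noteq> []"
  then have "cylinder M X xs = {\<omega>\<in>space M. \<forall>i\<le>length xs - 1. X i \<omega> = Some (xs ! i)}"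
    by (auto simp: cylinder_def less_Suc_eq_le[symmetric])
  then have "measure M (cylinder M X xs) =
      (if xs ! 0 = x0 then \<Prod>i<length xs - 1. p (xs ! i) (xs ! Suc i) else 0)"
    using assms by (simp add: sub_markov_chain_def)
  then show "emeasure M (cylinder M X xs) = (if hd xs = x0 then ennreal (path_weight p xs) else 0)"
    using \<open>xs \<noteq> []\<close> by (simp add: emeasure_eq_measure path_weight_conv_prod hd_conv_nth)
qed

lemma emeasure_hit_event:
  assumes chain: "sub_markov_chain M X p x0" and N: "N \<ge> 1"
  shows "emeasure M {\<omega>\<in>space M. hit_time X w N \<omega> < \<infinity> \<and>
           Q (loop_erase (path_upto X (the_enat (hit_time X w N \<omega>)) \<omega>))}
     = visit_sum p x0 w N (\<lambda>l. of_bool (Q l))"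
  unfolding hit_event_eq_UN_cylinder[OF chain N]
proof -
  let ?A = "{xs \<in> hit_paths w N. Q (loop_erase xs)}"
  have "disjoint_family_on (cylinder M X) ?A"
    by (rule disjoint_family_on_mono[OF _ disjoint_family_on_cylinder[OF N]]) auto
  then have "emeasure M (\<Union>xs\<in>?A. cylinder M X xs)
      = (\<integral>\<^sup>+xs. emeasure M (cylinder M X xs) \<partial>count_space ?A)"
    using sets_cylinder[OF chain] by (intro emeasure_UN_countable) auto
  also have "\<dots> = visit_sum p x0 w N (\<lambda>l. of_bool (Q l))"
    by (auto simp: visit_sum_def nn_integral_count_space_indicator emeasure_cylinder[OF chain]
        hit_paths_def visit_paths_def intro!: nn_integral_cong split: split_indicator)
  finally show "emeasure M (\<Union>xs\<in>?A. cylinder M X xs) = visit_sum p x0 w N (\<lambda>l. of_bool (Q l))" .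
qed

lemma measure_hit_event_scaling:
  assumes chain: "sub_markov_chain M X p x0" and "w \<noteq> x0" and "N \<ge> 1"
  shows "measure M {\<omega>\<in>space M. hit_time X w N \<omega> < \<infinity> \<and>
           Q (loop_erase (path_upto X (the_enat (hit_time X w N \<omega>)) \<omega>))}
     = enn2real (excursion_mass p w ^ (N - 1)) *
       measure M {\<omega>\<in>space M. hit_time X w 1 \<omega> < \<infinity> \<and>
           Q (loop_erase (path_upto X (the_enat (hit_time X w 1 \<omega>)) \<omega>))}"
proof -
  have "\<And>x y. 0 \<le> p x y"
    using chain by (simp add: sub_markov_chain_def substochastic_def)
  then have "visit_sum p x0 w N (\<lambda>l. of_bool (Q l))
      = excursion_mass p w ^ (N - 1) * visit_sum p x0 w 1 (\<lambda>l. of_bool (Q l))"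
    using assms(2,3) by (intro visit_sum_eq_power) auto
  then show ?thesis
    unfolding measure_def emeasure_hit_event[OF chain assms(3)] emeasure_hit_event[OF chain le_refl]
    by (simp add: enn2real_mult)
qed

lemma conditional_hit_event_eq:
  assumes chain: "sub_markov_chain M X p x0" and "w \<noteq> x0" and "N \<ge> 1"
    and pos: "measure M {\<omega>\<in>space M. hit_time X w N \<omega> < \<infinity>} > 0"
  shows "measure M {\<omega>\<in>space M. hit_time X w N \<omega> < \<infinity> \<and>
           Q (loop_erase (path_upto X (the_enat (hit_time X w N \<omega>)) \<omega>))}
       / measure M {\<omega>\<in>space M. hit_time X w N \<omega> < \<infinity>}
     = measure M {\<omega>\<in>space M. hit_time X w 1 \<omega> < \<infinity> \<and>
           Q (loop_erase (path_upto X (the_enat (hit_time X w 1 \<omega>)) \<omega>))}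
       / measure M {\<omega>\<in>space M. hit_time X w 1 \<omega> < \<infinity>}"
proof -
  note scaling = measure_hit_event_scaling[OF chain assms(2,3)]
  have total: "measure M {\<omega>\<in>space M. hit_time X w N \<omega> < \<infinity>}
      = enn2real (excursion_mass p w ^ (N - 1)) * measure M {\<omega>\<in>space M. hit_time X w 1 \<omega> < \<infinity>}"
    using scaling[of "\<lambda>_. True"] by (simp only: simp_thms)
  with pos have "enn2real (excursion_mass p w ^ (N - 1)) \<noteq> 0"
    by auto
  with total show ?thesis
    using scaling[of Q] by (simp only: mult_divide_mult_cancel_left not_False_eq_True)
qed

theorem mainTheorem18:
  fixes M :: "'w measure" and X :: "nat \<Rightarrow> 'w \<Rightarrow> 'a::countable option"
    and p :: "'a \<Rightarrow> 'a \<Rightarrow> real" and x0 w :: 'a and N :: nat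
  assumes chain: "sub_markov_chain M X p x0"
    and w_ne: "w \<noteq> x0"
    and N_pos: "N \<ge> 1"
    and pos: "measure M {\<omega>\<in>space M. hit_time X w N \<omega> < \<infinity>} > 0"
  shows "\<forall>\<gamma> :: 'a list.
     measure M {\<omega>\<in>space M. hit_time X w N \<omega> < \<infinity> \<and>
                   loop_erase (path_upto X (the_enat (hit_time X w N \<omega>)) \<omega>) = \<gamma>}
       / measure M {\<omega>\<in>space M. hit_time X w N \<omega> < \<infinity>}
   = measure M {\<omega>\<in>space M. hit_time X w 1 \<omega> < \<infinity> \<and>
                   loop_erase (path_upto X (the_enat (hit_time X w 1 \<omega>)) \<omega>) = \<gamma>}
       / measure M {\<omega>\<in>space M. hit_time X w 1 \<omega> < \<infinity>}"
  using conditional_hit_event_eq[OF chain w_ne N_pos pos, of "\<lambda>l. l = _"] by blast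

end
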